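(* Suppose the event $\xi_n$ occurs, let $t\in\{K+1,\dots,n\}$, and let $A_t$ be the action taken by the algorithm in round $t$. Then $$\mu(a^* )-\mu(A_t)\le 2c_t(A_t)+2c_t(a^* ).$$
   Context: $K$-armed bandit: actions $a\in[K]$ with unknown mean rewards $\mu(a)$; optimal action $a^*=\arg\max_a\mu(a)$. In each round the learner takes $A_t$ and observes reward $Y_t$ with mean $\mu(A_t)$. Notation: $T_t(a)=\sum_{s=1}^{t-1}\mathbb{1}\{A_s=a\}$; $\hat\mu_t(a)=T_t(a)^{-1}\sum_{s=1}^{t-1}\mathbb{1}\{A_s=a\}Y_s$; for fixed $\delta\in(0,1)$, $c_t(a)=\sqrt{2\log(1/\delta)/T_t(a)}$; $U_t(a)=\hat\mu_t(a)+c_t(a)$, $L_t(a)=\hat\mu_t(a)-c_t(a)$. Algorithm: in rounds $1,\dots,K$ take each action once; in each round $t\ge K+1$ take $A_t\in\arg\max_{a\in\tilde A_t}1/T_t(a)$ where $\tilde A_t=\{a\in[K]:U_t(a)\ge\max_{a'\in[K]}L_t(a')\}$ (ties broken arbitrarily). Event $\xi_n=\bigcap_{a\in[K]}\bigcap_{t=K+1}^n\{|\hat\mu_t(a)-\mu(a)|\le c_t(a)\}$. *)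

theory Defs
  imports Complex_Main
begin

text \<open>Pathwise bandit model. Actions are 1..K, rounds are 1,2,...; A t is the action
  taken in round t and Y t the observed reward in round t.\<close>

definition pulls :: "(nat \<Rightarrow> nat) \<Rightarrow> nat \<Rightarrow> nat \<Rightarrow> nat" where
  "pulls A t a = card {s \<in> {1..<t}. A s = a}"

definition muhat :: "(nat \<Rightarrow> nat) \<Rightarrow> (nat \<Rightarrow> real) \<Rightarrow> nat \<Rightarrow> nat \<Rightarrow> real" where
  "muhat A Y t a = (\<Sum>s\<in>{1..<t}. if A s = a then Y s else 0) / real (pulls A t a)"

definition conf :: "real \<Rightarrow> (nat \<Rightarrow> nat) \<Rightarrow> nat \<Rightarrow> nat \<Rightarrow> real" where
  "conf \<delta> A t a = sqrt (2 * ln (1 / \<delta>) / real (pulls A t a))"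

definition UCB :: "real \<Rightarrow> (nat \<Rightarrow> nat) \<Rightarrow> (nat \<Rightarrow> real) \<Rightarrow> nat \<Rightarrow> nat \<Rightarrow> real" where
  "UCB \<delta> A Y t a = muhat A Y t a + conf \<delta> A t a"

definition LCB :: "real \<Rightarrow> (nat \<Rightarrow> nat) \<Rightarrow> (nat \<Rightarrow> real) \<Rightarrow> nat \<Rightarrow> nat \<Rightarrow> real" where
  "LCB \<delta> A Y t a = muhat A Y t a - conf \<delta> A t a"

definition active_set :: "nat \<Rightarrow> real \<Rightarrow> (nat \<Rightarrow> nat) \<Rightarrow> (nat \<Rightarrow> real) \<Rightarrow> nat \<Rightarrow> nat set" where
  "active_set K \<delta> A Y t =
     {a \<in> {1..K}. UCB \<delta> A Y t a \<ge> Max ((\<lambda>a'. LCB \<delta> A Y t a') ` {1..K})}"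

definition is_run :: "nat \<Rightarrow> real \<Rightarrow> (nat \<Rightarrow> nat) \<Rightarrow> (nat \<Rightarrow> real) \<Rightarrow> bool" where
  "is_run K \<delta> A Y \<longleftrightarrow>
     A ` {1..K} = {1..K} \<and>
     (\<forall>t \<ge> K + 1. A t \<in> active_set K \<delta> A Y t \<and>
        (\<forall>a \<in> active_set K \<delta> A Y t. 1 / real (pulls A t a) \<le> 1 / real (pulls A t (A t))))"

definition good_event :: "nat \<Rightarrow> real \<Rightarrow> (nat \<Rightarrow> real) \<Rightarrow> (nat \<Rightarrow> nat) \<Rightarrow> (nat \<Rightarrow> real) \<Rightarrow> nat \<Rightarrow> bool" where
  "good_event K \<delta> \<mu> A Y n \<longleftrightarrow>
     (\<forall>a \<in> {1..K}. \<forall>t \<in> {K+1..n}. \<bar>muhat A Y t a - \<mu> a\<bar> \<le> conf \<delta> A t a)"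

end

theory Submission
  imports Defs
begin

text \<open>An action survives elimination only if its upper confidence bound reaches the largest
  lower confidence bound, in particular that of \<open>a\<^sup>*\<close>. On the good event both bounds
  are within one confidence width of the true means, so the gap is at most two widths on
  each side.\<close>

lemma gap_le_of_interval_overlap:
  fixes m\<^sub>a m\<^sub>b \<mu>\<^sub>a \<mu>\<^sub>b c\<^sub>a c\<^sub>b :: real
  assumes "m\<^sub>b - c\<^sub>b \<le> m\<^sub>a + c\<^sub>a"
    and "\<bar>m\<^sub>a - \<mu>\<^sub>a\<bar> \<le> c\<^sub>a" and "\<bar>m\<^sub>b - \<mu>\<^sub>b\<bar> \<le> c\<^sub>b"
  shows "\<mu>\<^sub>b - \<mu>\<^sub>a \<le> 2 * c\<^sub>a + 2 * c\<^sub>b"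
  using assms by (simp add: abs_le_iff)

lemma is_run_action_active:
  assumes "is_run K \<delta> A Y" and "K + 1 \<le> t"
  shows "A t \<in> active_set K \<delta> A Y t"
  using assms unfolding is_run_def by blast

lemma active_set_subset: "active_set K \<delta> A Y t \<subseteq> {1..K}"
  unfolding active_set_def by blast

lemma LCB_le_UCB_if_active:
  assumes "a \<in> active_set K \<delta> A Y t" and "b \<in> {1..K}"
  shows "LCB \<delta> A Y t b \<le> UCB \<delta> A Y t a"
proof -
  have "LCB \<delta> A Y t b \<le> Max ((\<lambda>a'. LCB \<delta> A Y t a') ` {1..K})"
    using assms(2) by (intro Max_ge) auto
  also have "\<dots> \<le> UCB \<delta> A Y t a"
    using assms(1) unfolding active_set_def by blast
  finally show ?thesis .
qed

lemma good_event_confidence: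
  assumes "good_event K \<delta> \<mu> A Y n" and "a \<in> {1..K}" and "t \<in> {K+1..n}"
  shows "\<bar>muhat A Y t a - \<mu> a\<bar> \<le> conf \<delta> A t a"
  using assms unfolding good_event_def by blast

lemma active_gap_bound:
  assumes "good_event K \<delta> \<mu> A Y n" and "t \<in> {K+1..n}"
    and "a \<in> active_set K \<delta> A Y t" and "b \<in> {1..K}"
  shows "\<mu> b - \<mu> a \<le> 2 * conf \<delta> A t a + 2 * conf \<delta> A t b"
proof (rule gap_le_of_interval_overlap)
  show "muhat A Y t b - conf \<delta> A t b \<le> muhat A Y t a + conf \<delta> A t a"
    using LCB_le_UCB_if_active[OF assms(3,4)] unfolding LCB_def UCB_def .
  show "\<bar>muhat A Y t a - \<mu> a\<bar> \<le> conf \<delta> A t a"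
    using assms active_set_subset by (blast intro: good_event_confidence)
  show "\<bar>muhat A Y t b - \<mu> b\<bar> \<le> conf \<delta> A t b"
    using assms by (blast intro: good_event_confidence)
qed

theorem lemma2:
  fixes K n t astar :: nat and \<delta> :: real and \<mu> Y :: "nat \<Rightarrow> real" and A :: "nat \<Rightarrow> nat"
  assumes "K \<ge> 1"
    and "0 < \<delta>" and "\<delta> < 1"
    and "astar \<in> {1..K}" and "\<forall>a \<in> {1..K}. \<mu> a \<le> \<mu> astar"
    and "is_run K \<delta> A Y"
    and "good_event K \<delta> \<mu> A Y n"
    and "t \<in> {K+1..n}"
  shows "\<mu> astar - \<mu> (A t) \<le> 2 * conf \<delta> A t (A t) + 2 * conf \<delta> A t astar"
proof -
  have "A t \<in> active_set K \<delta> A Y t"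
    using assms(6,8) by (simp add: is_run_action_active)
  then show ?thesis using active_gap_bound assms(4,7,8) by blast
qed

end
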